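(* Let $\rho=(R,V,\beta,\Phi)$ be a form ring such that at least one code of Type $\rho$ exists. Then $$\gcd\{N\ge1:\exists\ C\le V^N \text{ of Type }\rho\}=\min\{N\ge1:\exists\ C\le V^N\text{ of Type }\rho\}.$$
   Context: Let $R$ be a finite ring with $1$ and $V$ a finite left $R$-module. $\mathrm{Bil}(V,\mathbb Q/\mathbb Z)$ denotes the group of $\mathbb Z$-bilinear maps $V\times V\to\mathbb Q/\mathbb Z$; for $\beta$ in it and $r\in R$ write $\beta_r(v,w):=\beta(v,rw)$ and $\beta^\tau(v,w):=\beta(w,v)$. $\beta$ is nonsingular if $v\mapsto\beta(v,\cdot)$ is an isomorphism $V\to\mathrm{Hom}(V,\mathbb Q/\mathbb Z)$. $\mathrm{Quad}_0(V,\mathbb Q/\mathbb Z)$ is the group of maps $\phi:V\to\mathbb Q/\mathbb Z$ with $\phi(0)=0$ and $\phi(x+y+z)-\phi(x+y)-\phi(x+z)-\phi(y+z)+\phi(x)+\phi(y)+\phi(z)=0$ for all $x,y,z\in V$. For $r\in R$ put $(\phi[r])(v):=\phi(rv)$; a sub-$R$-qmodule of $\mathrm{Quad}_0(V,\mathbb Q/\mathbb Z)$ is a subgroup closed under all maps $\phi\mapsto\phi[r]$. Define $\{\!\{\beta\}\!\}(v):=\beta(v,v)$ and $\lambda(\phi)(v,w):=\phi(v+w)-\phi(v)-\phi(w)$. $\beta$ is admissible if it is nonsingular, $M:=\{\beta_r:r\in R\}$ is closed under $\tau$, and $r\mapsto\beta_r$ is a bijection $R\to M$. A form ring is a quadruple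 $\rho=(R,V,\beta,\Phi)$ with $\beta$ admissible and $\Phi$ a sub-$R$-qmodule of $\mathrm{Quad}_0(V,\mathbb Q/\mathbb Z)$ such that $\{\!\{m\}\!\}\in\Phi$ for all $m\in M$ and $\lambda(\Phi)\subseteq M$. A code of length $N$ is a left $R$-submodule $C\le V^N$; $C^\perp=\{x\in V^N:\sum_i\beta(x_i,c_i)=0\ \forall c\in C\}$; $C$ is self-dual if $C=C^\perp$, isotropic if $\sum_i\phi(c_i)=0$ for all $c\in C,\phi\in\Phi$; a code of Type $\rho$ is a self-dual isotropic code. *)

theory Defs
  imports Complex_Main
begin

definition qz_rel :: "rat \<Rightarrow> rat \<Rightarrow> bool" where
  "qz_rel x y \<longleftrightarrow> x - y \<in> \<int>"

quotient_type qz = rat / qz_rel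
proof (rule equivpI)
  show "reflp qz_rel" by (rule reflpI) (simp add: qz_rel_def)
  show "symp qz_rel"
  proof (rule sympI)
    fix x y assume "qz_rel x y"
    then have "- (x - y) \<in> \<int>" unfolding qz_rel_def by (rule Ints_minus)
    then show "qz_rel y x" by (simp add: qz_rel_def)
  qed
  show "transp qz_rel"
  proof (rule transpI)
    fix x y z assume "qz_rel x y" "qz_rel y z"
    then have "(x - y) + (y - z) \<in> \<int>" unfolding qz_rel_def by (rule Ints_add)
    then show "qz_rel x z" by (simp add: qz_rel_def)
  qed
qed

instantiation qz :: ab_group_add
begin
lift_definition zero_qz :: qz is "0::rat" .
lift_definition plus_qz :: "qz \<Rightarrow> qz \<Rightarrow> qz" is "(+)"
proof -
  fix a b c d :: rat assume "qz_rel a b" "qz_rel c d"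
  then have "(a - b) + (c - d) \<in> \<int>" unfolding qz_rel_def by (rule Ints_add)
  then show "qz_rel (a + c) (b + d)" by (simp add: qz_rel_def algebra_simps)
qed
lift_definition uminus_qz :: "qz \<Rightarrow> qz" is "uminus"
proof -
  fix a b :: rat assume "qz_rel a b"
  then have "- (a - b) \<in> \<int>" unfolding qz_rel_def by (rule Ints_minus)
  then show "qz_rel (- a) (- b)" by (simp add: qz_rel_def algebra_simps)
qed
lift_definition minus_qz :: "qz \<Rightarrow> qz \<Rightarrow> qz" is "(-)"
proof -
  fix a b c d :: rat assume "qz_rel a b" "qz_rel c d"
  then have "(a - b) - (c - d) \<in> \<int>" unfolding qz_rel_def by (rule Ints_diff)
  then show "qz_rel (a - c) (b - d)" by (simp add: qz_rel_def algebra_simps)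
qed
instance
  by standard (transfer; simp add: qz_rel_def algebra_simps)+
end

definition left_module :: "('r::ring_1 \<Rightarrow> 'v::ab_group_add \<Rightarrow> 'v) \<Rightarrow> bool" where
  "left_module smult \<longleftrightarrow>
     (\<forall>r v w. smult r (v + w) = smult r v + smult r w) \<and>
     (\<forall>r s v. smult (r + s) v = smult r v + smult s v) \<and>
     (\<forall>r s v. smult (r * s) v = smult r (smult s v)) \<and>
     (\<forall>v. smult 1 v = v)"

definition additive_qz :: "('v::ab_group_add \<Rightarrow> qz) \<Rightarrow> bool" where
  "additive_qz f \<longleftrightarrow> (\<forall>v w. f (v + w) = f v + f w)"

definition bilinear_qz :: "('v::ab_group_add \<Rightarrow> 'v \<Rightarrow> qz) \<Rightarrow> bool" where
  "bilinear_qz \<beta> \<longleftrightarrow>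
     (\<forall>v v' w. \<beta> (v + v') w = \<beta> v w + \<beta> v' w) \<and>
     (\<forall>v w w'. \<beta> v (w + w') = \<beta> v w + \<beta> v w')"

definition nonsingular :: "('v::ab_group_add \<Rightarrow> 'v \<Rightarrow> qz) \<Rightarrow> bool" where
  "nonsingular \<beta> \<longleftrightarrow> bij_betw (\<lambda>v. \<beta> v) UNIV {f. additive_qz f}"

definition beta_r :: "('r \<Rightarrow> 'v \<Rightarrow> 'v) \<Rightarrow> ('v \<Rightarrow> 'v \<Rightarrow> qz) \<Rightarrow> 'r \<Rightarrow> 'v \<Rightarrow> 'v \<Rightarrow> qz" where
  "beta_r smult \<beta> r = (\<lambda>v w. \<beta> v (smult r w))"

definition transp_form :: "('v \<Rightarrow> 'v \<Rightarrow> qz) \<Rightarrow> 'v \<Rightarrow> 'v \<Rightarrow> qz" where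
  "transp_form \<beta> = (\<lambda>v w. \<beta> w v)"

definition admissible :: "('r::ring_1 \<Rightarrow> 'v::ab_group_add \<Rightarrow> 'v) \<Rightarrow> ('v \<Rightarrow> 'v \<Rightarrow> qz) \<Rightarrow> bool" where
  "admissible smult \<beta> \<longleftrightarrow>
     nonsingular \<beta> \<and>
     (\<forall>m \<in> range (beta_r smult \<beta>). transp_form m \<in> range (beta_r smult \<beta>)) \<and>
     inj (beta_r smult \<beta>)"

definition Quad0 :: "('v::ab_group_add \<Rightarrow> qz) set" where
  "Quad0 = {\<phi>. \<phi> 0 = 0 \<and>
     (\<forall>x y z. \<phi> (x + y + z) - \<phi> (x + y) - \<phi> (x + z) - \<phi> (y + z) + \<phi> x + \<phi> y + \<phi> z = 0)}"

definition sub_qmodule :: "('r \<Rightarrow> 'v::ab_group_add \<Rightarrow> 'v) \<Rightarrow> ('v \<Rightarrow> qz) set \<Rightarrow> bool" where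
  "sub_qmodule smult \<Phi> \<longleftrightarrow>
     \<Phi> \<subseteq> Quad0 \<and> (\<lambda>_. 0) \<in> \<Phi> \<and>
     (\<forall>\<phi>\<in>\<Phi>. \<forall>\<psi>\<in>\<Phi>. (\<lambda>v. \<phi> v + \<psi> v) \<in> \<Phi>) \<and>
     (\<forall>\<phi>\<in>\<Phi>. (\<lambda>v. - \<phi> v) \<in> \<Phi>) \<and>
     (\<forall>\<phi>\<in>\<Phi>. \<forall>r. (\<lambda>v. \<phi> (smult r v)) \<in> \<Phi>)"

definition diag_form :: "('v \<Rightarrow> 'v \<Rightarrow> qz) \<Rightarrow> 'v \<Rightarrow> qz" where
  "diag_form \<beta> = (\<lambda>v. \<beta> v v)"

definition polar :: "('v::ab_group_add \<Rightarrow> qz) \<Rightarrow> 'v \<Rightarrow> 'v \<Rightarrow> qz" where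
  "polar \<phi> = (\<lambda>v w. \<phi> (v + w) - \<phi> v - \<phi> w)"

definition form_ring ::
  "('r::{ring_1,finite} \<Rightarrow> 'v::{ab_group_add,finite} \<Rightarrow> 'v) \<Rightarrow> ('v \<Rightarrow> 'v \<Rightarrow> qz) \<Rightarrow> ('v \<Rightarrow> qz) set \<Rightarrow> bool" where
  "form_ring smult \<beta> \<Phi> \<longleftrightarrow>
     left_module smult \<and> bilinear_qz \<beta> \<and> admissible smult \<beta> \<and>
     sub_qmodule smult \<Phi> \<and>
     (\<forall>m \<in> range (beta_r smult \<beta>). diag_form m \<in> \<Phi>) \<and>
     polar ` \<Phi> \<subseteq> range (beta_r smult \<beta>)"

text \<open>Words of length N: functions nat => V vanishing outside {..<N} (a model of V^N).\<close>
definition words :: "nat \<Rightarrow> (nat \<Rightarrow> 'v::zero) set" where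
  "words N = {x. \<forall>i\<ge>N. x i = 0}"

definition is_code :: "('r \<Rightarrow> 'v::ab_group_add \<Rightarrow> 'v) \<Rightarrow> nat \<Rightarrow> (nat \<Rightarrow> 'v) set \<Rightarrow> bool" where
  "is_code smult N C \<longleftrightarrow>
     C \<subseteq> words N \<and> (\<lambda>_. 0) \<in> C \<and>
     (\<forall>x\<in>C. \<forall>y\<in>C. (\<lambda>i. x i + y i) \<in> C) \<and>
     (\<forall>x\<in>C. \<forall>r. (\<lambda>i. smult r (x i)) \<in> C)"

definition dual_code :: "('v \<Rightarrow> 'v \<Rightarrow> qz) \<Rightarrow> nat \<Rightarrow> (nat \<Rightarrow> 'v::zero) set \<Rightarrow> (nat \<Rightarrow> 'v) set" where
  "dual_code \<beta> N C = {x \<in> words N. \<forall>c\<in>C. (\<Sum>i<N. \<beta> (x i) (c i)) = 0}"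

definition isotropic :: "('v \<Rightarrow> qz) set \<Rightarrow> nat \<Rightarrow> (nat \<Rightarrow> 'v) set \<Rightarrow> bool" where
  "isotropic \<Phi> N C \<longleftrightarrow> (\<forall>c\<in>C. \<forall>\<phi>\<in>\<Phi>. (\<Sum>i<N. \<phi> (c i)) = 0)"

definition code_of_type ::
  "('r \<Rightarrow> 'v::ab_group_add \<Rightarrow> 'v) \<Rightarrow> ('v \<Rightarrow> 'v \<Rightarrow> qz) \<Rightarrow> ('v \<Rightarrow> qz) set \<Rightarrow> nat \<Rightarrow> (nat \<Rightarrow> 'v) set \<Rightarrow> bool" where
  "code_of_type smult \<beta> \<Phi> N C \<longleftrightarrow>
     is_code smult N C \<and> C = dual_code \<beta> N C \<and> isotropic \<Phi> N C"

end

theory Submission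
  imports Defs "HOL-Library.Function_Algebras" "HOL-Library.Set_Algebras"
begin

text \<open>
  If D is a code of Type \<rho> of length m and C one of length m + k, then the words x of length k
  with (d, x) \<in> C for some d \<in> D form a code of Type \<rho> of length k. Isotropy and self-orthogonality
  of this quotient code are inherited coordinatewise. For the reverse inclusion, (0, x) is orthogonal
  to C \<inter> (D \<times> V^k), hence lies in C^\<bottom> + (D \<times> V^k)^\<bottom> = C + (D \<times> 0); this uses
  (C \<inter> E)^\<bottom> = C^\<bottom> + E^\<bottom>, a consequence of \<bar>T\<bar> \<bar>T^\<bottom>\<bar> = \<bar>W\<bar> for a nondegenerate pairing
  into Q/Z, which is proved by summing characters of Q/Z in two ways. Consequently the set of
  lengths is closed under subtracting the minimal length m, so every length is a multiple of m.
\<close>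

lift_definition qz_char :: "qz \<Rightarrow> complex" is "\<lambda>q. cis (2 * pi * of_rat q)"
proof -
  fix x y :: rat
  assume "qz_rel x y"
  then obtain n :: int where "x = y + of_int n"
    unfolding qz_rel_def by (metis Ints_cases add.commute diff_add_cancel)
  then show "cis (2 * pi * of_rat x) = cis (2 * pi * of_rat y)"
    by (simp add: of_rat_add distrib_left flip: cis_mult)
qed

lemma qz_char_add: "qz_char (a + b) = qz_char a * qz_char b"
  by transfer (simp add: of_rat_add distrib_left cis_mult)

lemma qz_char_zero: "qz_char 0 = 1"
  by transfer simp

lemma qz_char_eq_1_iff: "qz_char a = 1 \<longleftrightarrow> a = 0"
proof (transfer, rule iffI)
  fix q :: rat
  assume "cis (2 * pi * of_rat q) = 1"
  then have "cos (2 * pi * of_rat q) = 1"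
    by (metis cis.sel(1) one_complex.sel(1))
  then obtain n :: int where "2 * pi * of_rat q = of_int n * 2 * pi"
    by (auto simp: cos_one_2pi_int)
  then have "of_rat q = (of_int n :: real)"
    by simp
  then have "q = of_int n"
    by (metis of_rat_eq_iff of_rat_of_int_eq)
  then show "qz_rel q 0"
    by (simp add: qz_rel_def)
next
  fix q :: rat
  assume "qz_rel q 0"
  then obtain n :: int where "q = of_int n"
    unfolding qz_rel_def by (auto elim: Ints_cases)
  then show "cis (2 * pi * of_rat q) = 1"
    by simp
qed

definition add_subgroup :: "'a::ab_group_add set \<Rightarrow> bool" where
  "add_subgroup T \<longleftrightarrow> 0 \<in> T \<and> (\<forall>x\<in>T. \<forall>y\<in>T. x + y \<in> T) \<and> (\<forall>x\<in>T. - x \<in> T)"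

lemma add_subgroup_zero: "add_subgroup T \<Longrightarrow> 0 \<in> T"
  by (simp add: add_subgroup_def)

lemma add_subgroup_add: "add_subgroup T \<Longrightarrow> x \<in> T \<Longrightarrow> y \<in> T \<Longrightarrow> x + y \<in> T"
  by (simp add: add_subgroup_def)

lemma add_subgroup_uminus: "add_subgroup T \<Longrightarrow> x \<in> T \<Longrightarrow> - x \<in> T"
  by (simp add: add_subgroup_def)

lemma add_subgroup_diff: "add_subgroup T \<Longrightarrow> x \<in> T \<Longrightarrow> y \<in> T \<Longrightarrow> x - y \<in> T"
  by (metis add_subgroup_add add_subgroup_uminus diff_conv_add_uminus)

lemma add_subgroup_set_plus:
  assumes "add_subgroup P" "add_subgroup Q"
  shows "add_subgroup (P + Q)"
  unfolding add_subgroup_def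
proof (intro conjI ballI)
  show "0 \<in> P + Q"
    using set_plus_intro[OF add_subgroup_zero add_subgroup_zero] assms by fastforce
next
  fix x y assume "x \<in> P + Q" "y \<in> P + Q"
  then obtain p q p' q' where "x = p + q" "y = p' + q'" "p \<in> P" "q \<in> Q" "p' \<in> P" "q' \<in> Q"
    by (auto elim!: set_plus_elim)
  then have "x + y = (p + p') + (q + q')" "p + p' \<in> P" "q + q' \<in> Q"
    using assms by (simp_all add: algebra_simps add_subgroup_add)
  then show "x + y \<in> P + Q"
    by (simp add: set_plus_intro)
next
  fix x assume "x \<in> P + Q"
  then obtain p q where "x = p + q" "p \<in> P" "q \<in> Q"
    by (auto elim!: set_plus_elim)
  then have "- x = - p + - q" "- p \<in> P" "- q \<in> Q"
    using assms by (simp_all add: add_subgroup_uminus)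
  then show "- x \<in> P + Q"
    by (metis set_plus_intro)
qed

lemma set_plus_subset_add_subgroup:
  "add_subgroup W \<Longrightarrow> P \<subseteq> W \<Longrightarrow> Q \<subseteq> W \<Longrightarrow> P + Q \<subseteq> W"
  by (auto elim!: set_plus_elim intro: add_subgroup_add)

lemma sum_qz_char_additive:
  fixes f :: "'a::ab_group_add \<Rightarrow> qz"
  assumes T: "finite T" "add_subgroup T" and f: "additive_qz f"
  shows "(\<Sum>t\<in>T. qz_char (f t)) = (if \<forall>t\<in>T. f t = 0 then of_nat (card T) else 0)"
proof (cases "\<forall>t\<in>T. f t = 0")
  case True
  then show ?thesis
    by (simp add: qz_char_zero)
next
  case False
  then obtain t0 where t0: "t0 \<in> T" "f t0 \<noteq> 0"
    by blast
  define S where "S = (\<Sum>t\<in>T. qz_char (f t))"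
  have translation: "bij_betw ((+) t0) T T"
    by (rule bij_betw_byWitness[where f' = "\<lambda>t. t - t0"])
      (use T(2) t0(1) in \<open>auto intro: add_subgroup_add add_subgroup_diff\<close>)
  then have "S = (\<Sum>t\<in>T. qz_char (f (t0 + t)))"
    unfolding S_def using sum.reindex_bij_betw[OF translation, of "\<lambda>t. qz_char (f t)"] by simp
  also have "\<dots> = qz_char (f t0) * S"
    using f unfolding S_def additive_qz_def by (simp add: qz_char_add sum_distrib_left)
  finally have "(1 - qz_char (f t0)) * S = 0"
    by (simp add: algebra_simps)
  moreover have "qz_char (f t0) \<noteq> 1"
    using t0(2) by (simp add: qz_char_eq_1_iff)
  ultimately have "S = 0"
    by simp
  then show ?thesis
    unfolding S_def if_not_P[OF False] .
qed

definition left_perp :: "('a \<Rightarrow> 'a \<Rightarrow> qz) \<Rightarrow> 'a set \<Rightarrow> 'a set \<Rightarrow> 'a set" where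
  "left_perp B W S = {u \<in> W. \<forall>s\<in>S. B u s = 0}"

definition right_perp :: "('a \<Rightarrow> 'a \<Rightarrow> qz) \<Rightarrow> 'a set \<Rightarrow> 'a set \<Rightarrow> 'a set" where
  "right_perp B W S = {v \<in> W. \<forall>s\<in>S. B s v = 0}"

definition left_nondegenerate :: "('a::zero \<Rightarrow> 'a \<Rightarrow> qz) \<Rightarrow> 'a set \<Rightarrow> bool" where
  "left_nondegenerate B W \<longleftrightarrow> (\<forall>u\<in>W. (\<forall>v\<in>W. B u v = 0) \<longrightarrow> u = 0)"

lemma left_perp_transp_form: "left_perp (transp_form B) W S = right_perp B W S"
  by (simp add: left_perp_def right_perp_def transp_form_def)

lemma right_perp_transp_form: "right_perp (transp_form B) W S = left_perp B W S"
  by (simp add: left_perp_def right_perp_def transp_form_def)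

lemma additive_qz_zero: "additive_qz f \<Longrightarrow> f 0 = 0"
  unfolding additive_qz_def by (metis add.right_neutral add_left_cancel)

lemma additive_qz_bilinear_left: "bilinear_qz B \<Longrightarrow> additive_qz (\<lambda>u. B u v)"
  by (simp add: additive_qz_def bilinear_qz_def)

lemma additive_qz_bilinear_right: "bilinear_qz B \<Longrightarrow> additive_qz (B u)"
  by (simp add: additive_qz_def bilinear_qz_def)

lemma bilinear_qz_zero_left: "bilinear_qz B \<Longrightarrow> B 0 v = 0"
  using additive_qz_zero[OF additive_qz_bilinear_left] .

lemma bilinear_qz_zero_right: "bilinear_qz B \<Longrightarrow> B u 0 = 0"
  using additive_qz_zero[OF additive_qz_bilinear_right] .

lemma bilinear_qz_transp_form: "bilinear_qz B \<Longrightarrow> bilinear_qz (transp_form B)"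
  by (simp add: bilinear_qz_def transp_form_def)

lemma add_subgroup_right_perp:
  assumes "add_subgroup W" "bilinear_qz B"
  shows "add_subgroup (right_perp B W S)"
  using assms unfolding add_subgroup_def right_perp_def bilinear_qz_def
  by (auto simp: bilinear_qz_zero_right[OF assms(2)])
    (metis add.right_inverse add_left_cancel bilinear_qz_zero_right[OF assms(2)])

lemma add_subgroup_left_perp:
  assumes "add_subgroup W" "bilinear_qz B"
  shows "add_subgroup (left_perp B W S)"
  using add_subgroup_right_perp[OF assms(1) bilinear_qz_transp_form[OF assms(2)]]
  by (simp add: right_perp_transp_form)

lemma card_mult_right_perp:
  fixes B :: "'a::ab_group_add \<Rightarrow> 'a \<Rightarrow> qz"
  assumes W: "finite W" "add_subgroup W" and B: "bilinear_qz B" "left_nondegenerate B W"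
    and T: "add_subgroup T" "T \<subseteq> W"
  shows "card T * card (right_perp B W T) = card W"
proof -
  have finT: "finite T"
    using W(1) T(2) by (rule finite_subset[rotated])
  have "(\<Sum>t\<in>T. \<Sum>y\<in>W. qz_char (B t y)) = (\<Sum>t\<in>T. if t = 0 then of_nat (card W) else 0)"
  proof (rule sum.cong[OF refl])
    fix t assume "t \<in> T"
    then have "(\<forall>y\<in>W. B t y = 0) \<longleftrightarrow> t = 0"
      using B T(2) bilinear_qz_zero_left unfolding left_nondegenerate_def by blast
    then show "(\<Sum>y\<in>W. qz_char (B t y)) = (if t = 0 then of_nat (card W) else 0)"
      using sum_qz_char_additive[OF W additive_qz_bilinear_right[OF B(1)]] by simp
  qed
  also have "\<dots> = of_nat (card W)"
    using finT add_subgroup_zero[OF T(1)] by (simp add: sum.delta)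
  finally have by_rows: "(\<Sum>t\<in>T. \<Sum>y\<in>W. qz_char (B t y)) = of_nat (card W)" .
  have "(\<Sum>y\<in>W. \<Sum>t\<in>T. qz_char (B t y))
      = (\<Sum>y\<in>W. if \<forall>t\<in>T. B t y = 0 then of_nat (card T) else 0)"
    using sum_qz_char_additive[OF finT T(1) additive_qz_bilinear_left[OF B(1)]] by simp
  also have "\<dots> = (\<Sum>y\<in>right_perp B W T. of_nat (card T))"
    unfolding right_perp_def by (rule sum.inter_filter[symmetric, OF W(1)])
  finally have by_columns: "(\<Sum>y\<in>W. \<Sum>t\<in>T. qz_char (B t y)) = of_nat (card T * card (right_perp B W T))"
    by simp
  have "(\<Sum>t\<in>T. \<Sum>y\<in>W. qz_char (B t y)) = (\<Sum>y\<in>W. \<Sum>t\<in>T. qz_char (B t y))"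
    by (rule sum.swap)
  then have "(of_nat (card W) :: complex) = of_nat (card T * card (right_perp B W T))"
    using by_rows by_columns by simp
  then show ?thesis
    by (simp only: of_nat_eq_iff)
qed


lemma left_nondegenerate_transp_form:
  fixes B :: "'a::ab_group_add \<Rightarrow> 'a \<Rightarrow> qz"
  assumes W: "finite W" "add_subgroup W" and B: "bilinear_qz B" "left_nondegenerate B W"
  shows "left_nondegenerate (transp_form B) W"
proof -
  have "card W * card (right_perp B W W) = card W"
    using card_mult_right_perp[OF W B W(2) order_refl] .
  moreover have "card W > 0"
    using W add_subgroup_zero card_gt_0_iff by blast
  ultimately have "card (right_perp B W W) = 1"
    by simp
  moreover have "0 \<in> right_perp B W W"
    using add_subgroup_zero[OF add_subgroup_right_perp[OF W(2) B(1)]] .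
  ultimately have "right_perp B W W = {0}"
    by (metis card_1_singletonE singletonD)
  then show ?thesis
    unfolding left_nondegenerate_def right_perp_def transp_form_def by auto
qed

lemma card_mult_left_perp:
  fixes B :: "'a::ab_group_add \<Rightarrow> 'a \<Rightarrow> qz"
  assumes W: "finite W" "add_subgroup W" and B: "bilinear_qz B" "left_nondegenerate B W"
    and T: "add_subgroup T" "T \<subseteq> W"
  shows "card T * card (left_perp B W T) = card W"
  using card_mult_right_perp[OF W bilinear_qz_transp_form[OF B(1)]
      left_nondegenerate_transp_form[OF W B] T]
  by (simp add: right_perp_transp_form)

lemma left_perp_right_perp:
  fixes B :: "'a::ab_group_add \<Rightarrow> 'a \<Rightarrow> qz"
  assumes W: "finite W" "add_subgroup W" and B: "bilinear_qz B" "left_nondegenerate B W"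
    and T: "add_subgroup T" "T \<subseteq> W"
  shows "left_perp B W (right_perp B W T) = T"
proof -
  let ?R = "right_perp B W T"
  have R: "add_subgroup ?R" "?R \<subseteq> W"
    using add_subgroup_right_perp[OF W(2) B(1)] by (auto simp: right_perp_def)
  have "card T * card ?R = card ?R * card (left_perp B W ?R)"
    using card_mult_right_perp[OF W B T] card_mult_left_perp[OF W B R] by simp
  moreover have "card ?R > 0"
    using R W(1) add_subgroup_zero card_gt_0_iff finite_subset by blast
  ultimately have "card (left_perp B W ?R) = card T"
    by simp
  moreover have "T \<subseteq> left_perp B W ?R"
    using T(2) unfolding left_perp_def right_perp_def by auto
  moreover have "finite (left_perp B W ?R)"
    using W(1) unfolding left_perp_def by simp
  ultimately show ?thesis
    by (metis card_subset_eq)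
qed

lemma right_perp_left_perp:
  fixes B :: "'a::ab_group_add \<Rightarrow> 'a \<Rightarrow> qz"
  assumes W: "finite W" "add_subgroup W" and B: "bilinear_qz B" "left_nondegenerate B W"
    and T: "add_subgroup T" "T \<subseteq> W"
  shows "right_perp B W (left_perp B W T) = T"
  using left_perp_right_perp[OF W bilinear_qz_transp_form[OF B(1)]
      left_nondegenerate_transp_form[OF W B] T]
  by (simp add: left_perp_transp_form right_perp_transp_form)

lemma right_perp_set_plus:
  assumes "bilinear_qz B" "0 \<in> P" "0 \<in> Q"
  shows "right_perp B W (P + Q) = right_perp B W P \<inter> right_perp B W Q"
proof
  have "P \<subseteq> P + Q" "Q \<subseteq> P + Q"
    using assms(2,3) by (metis add.right_neutral add_0 set_plus_intro subsetI)+
  then show "right_perp B W (P + Q) \<subseteq> right_perp B W P \<inter> right_perp B W Q"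
    unfolding right_perp_def by blast
  show "right_perp B W P \<inter> right_perp B W Q \<subseteq> right_perp B W (P + Q)"
    using assms(1) unfolding right_perp_def bilinear_qz_def by (auto elim!: set_plus_elim)
qed

lemma left_perp_Int:
  fixes B :: "'a::ab_group_add \<Rightarrow> 'a \<Rightarrow> qz"
  assumes W: "finite W" "add_subgroup W" and B: "bilinear_qz B" "left_nondegenerate B W"
    and C: "add_subgroup C" "C \<subseteq> W" and E: "add_subgroup E" "E \<subseteq> W"
  shows "left_perp B W (C \<inter> E) = left_perp B W C + left_perp B W E"
proof -
  let ?P = "left_perp B W C" and ?Q = "left_perp B W E"
  have P: "add_subgroup ?P" "?P \<subseteq> W" and Q: "add_subgroup ?Q" "?Q \<subseteq> W"
    using add_subgroup_left_perp[OF W(2) B(1)] by (auto simp: left_perp_def)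
  have "right_perp B W (?P + ?Q) = right_perp B W ?P \<inter> right_perp B W ?Q"
    using right_perp_set_plus[OF B(1) add_subgroup_zero[OF P(1)] add_subgroup_zero[OF Q(1)]] .
  also have "\<dots> = C \<inter> E"
    using right_perp_left_perp[OF W B C] right_perp_left_perp[OF W B E] by simp
  finally have "left_perp B W (C \<inter> E) = left_perp B W (right_perp B W (?P + ?Q))"
    by simp
  also have "\<dots> = ?P + ?Q"
    using left_perp_right_perp[OF W B add_subgroup_set_plus[OF P(1) Q(1)]
        set_plus_subset_add_subgroup[OF W(2) P(2) Q(2)]] .
  finally show ?thesis .
qed


lemma finite_words: "finite (words N :: (nat \<Rightarrow> 'v::{finite,zero}) set)"
proof -
  have "finite {x. \<forall>i. (i \<in> {..<N} \<longrightarrow> x i \<in> (UNIV :: 'v set)) \<and> (i \<notin> {..<N} \<longrightarrow> x i = 0)}"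
    by (rule finite_set_of_finite_funs) simp_all
  then show ?thesis
    by (simp add: words_def not_less)
qed

lemma add_subgroup_words: "add_subgroup (words N :: (nat \<Rightarrow> 'v::ab_group_add) set)"
  by (simp add: add_subgroup_def words_def)

lemma left_module_smult_zero: "left_module smult \<Longrightarrow> smult r 0 = 0"
  unfolding left_module_def by (metis add_cancel_right_right)

lemma left_module_smult_minus_one: "left_module smult \<Longrightarrow> smult (- 1) v = - v"
  unfolding left_module_def by (metis add.right_inverse add_cancel_right_right neg_eq_iff_add_eq_0)

lemma add_subgroup_code:
  fixes smult :: "'r::ring_1 \<Rightarrow> 'v::ab_group_add \<Rightarrow> 'v"
  assumes "left_module smult" "is_code smult N C"
  shows "add_subgroup C"
proof -
  have "- x \<in> C" if "x \<in> C" for x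
  proof -
    have "(\<lambda>i. smult (- 1) (x i)) \<in> C"
      using assms(2) that unfolding is_code_def by blast
    moreover have "(\<lambda>i. smult (- 1) (x i)) = - x"
      using left_module_smult_minus_one[OF assms(1)] by (simp add: fun_eq_iff)
    ultimately show ?thesis
      by simp
  qed
  then show ?thesis
    using assms(2) unfolding is_code_def add_subgroup_def by (auto simp: zero_fun_def plus_fun_def)
qed

definition word_form :: "('v \<Rightarrow> 'v \<Rightarrow> qz) \<Rightarrow> nat \<Rightarrow> (nat \<Rightarrow> 'v) \<Rightarrow> (nat \<Rightarrow> 'v) \<Rightarrow> qz" where
  "word_form \<beta> N x y = (\<Sum>i<N. \<beta> (x i) (y i))"

lemma dual_code_eq_left_perp: "dual_code \<beta> N C = left_perp (word_form \<beta> N) (words N) C"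
  by (simp add: dual_code_def left_perp_def word_form_def)

lemma bilinear_word_form: "bilinear_qz \<beta> \<Longrightarrow> bilinear_qz (word_form \<beta> N)"
  by (simp add: bilinear_qz_def word_form_def sum.distrib)

lemma left_nondegenerate_word_form:
  assumes \<beta>: "bilinear_qz \<beta>" "inj \<beta>"
  shows "left_nondegenerate (word_form \<beta> N) (words N)"
  unfolding left_nondegenerate_def
proof (intro ballI impI)
  fix x assume x: "x \<in> words N" and orth: "\<forall>y\<in>words N. word_form \<beta> N x y = 0"
  have "x j = 0" if "j < N" for j
  proof -
    have "\<beta> (x j) w = 0" for w
    proof -
      let ?e = "\<lambda>i. if i = j then w else 0"
      have "?e \<in> words N"
        using that by (simp add: words_def)
      then have "0 = word_form \<beta> N x ?e"
        using orth by simp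
      also have "\<dots> = (\<Sum>i<N. if i = j then \<beta> (x j) w else 0)"
        unfolding word_form_def using bilinear_qz_zero_right[OF \<beta>(1)] by (intro sum.cong) auto
      also have "\<dots> = \<beta> (x j) w"
        using that by simp
      finally show ?thesis
        by simp
    qed
    then have "\<beta> (x j) = \<beta> 0"
      using bilinear_qz_zero_left[OF \<beta>(1)] by (simp add: fun_eq_iff)
    then show ?thesis
      using \<beta>(2) by (simp add: inj_eq)
  qed
  moreover have "x j = 0" if "\<not> j < N" for j
    using x that by (simp add: words_def)
  ultimately show "x = 0"
    by (auto simp: fun_eq_iff)
qed


definition word_append :: "nat \<Rightarrow> (nat \<Rightarrow> 'v) \<Rightarrow> (nat \<Rightarrow> 'v) \<Rightarrow> nat \<Rightarrow> 'v" where
  "word_append M y x = (\<lambda>i. if i < M then y i else x (i - M))"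

lemma word_append_words: "y \<in> words M \<Longrightarrow> x \<in> words K \<Longrightarrow> word_append M y x \<in> words (M + K)"
  by (simp add: words_def word_append_def)

lemma word_append_zero: "word_append M 0 0 = 0"
  by (simp add: word_append_def fun_eq_iff)

lemma word_append_add: "word_append M y x + word_append M y' x' = word_append M (y + y') (x + x')"
  by (simp add: word_append_def fun_eq_iff)

lemma word_append_smult:
  "(\<lambda>i. smult r (word_append M y x i)) = word_append M (\<lambda>i. smult r (y i)) (\<lambda>i. smult r (x i))"
  by (simp add: word_append_def fun_eq_iff)

lemma words_add_cases:
  assumes "u \<in> words (M + K)"
  obtains y x where "y \<in> words M" "x \<in> words K" "u = word_append M y x"
proof
  show "(\<lambda>i. if i < M then u i else 0) \<in> words M" "(\<lambda>j. u (M + j)) \<in> words K"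
    using assms by (simp_all add: words_def)
  show "u = word_append M (\<lambda>i. if i < M then u i else 0) (\<lambda>j. u (M + j))"
    by (simp add: word_append_def fun_eq_iff)
qed

lemma sum_lessThan_add:
  fixes M K :: nat
  shows "(\<Sum>i<M + K. g i) = (\<Sum>i<M. g i) + (\<Sum>j<K. g (M + j))"
  by (induction K) (simp_all add: add_ac)

lemma sum_word_append: "(\<Sum>i<M + K. f (word_append M y x i)) = (\<Sum>i<M. f (y i)) + (\<Sum>i<K. f (x i))"
  by (simp add: sum_lessThan_add word_append_def)

lemma word_form_append:
  "word_form \<beta> (M + K) (word_append M y x) (word_append M y' x') = word_form \<beta> M y y' + word_form \<beta> K x x'"
  by (simp add: word_form_def sum_lessThan_add word_append_def)

definition prefixed_words :: "nat \<Rightarrow> (nat \<Rightarrow> 'v) set \<Rightarrow> nat \<Rightarrow> (nat \<Rightarrow> 'v::zero) set" where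
  "prefixed_words M D K = {word_append M d x | d x. d \<in> D \<and> x \<in> words K}"

lemma prefixed_words_subset: "D \<subseteq> words M \<Longrightarrow> prefixed_words M D K \<subseteq> words (M + K)"
  by (auto simp: prefixed_words_def intro: word_append_words)

lemma add_subgroup_prefixed_words:
  assumes "add_subgroup D"
  shows "add_subgroup (prefixed_words M D K)"
  unfolding add_subgroup_def
proof (intro conjI ballI)
  show "0 \<in> prefixed_words M D K"
    using assms add_subgroup_zero[OF add_subgroup_words] word_append_zero
    unfolding prefixed_words_def by (metis (mono_tags, lifting) add_subgroup_zero mem_Collect_eq)
next
  fix u v assume "u \<in> prefixed_words M D K" "v \<in> prefixed_words M D K"
  then show "u + v \<in> prefixed_words M D K"
    using assms add_subgroup_words unfolding prefixed_words_def
    by (auto simp: word_append_add) (blast intro: add_subgroup_add)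
next
  fix u assume "u \<in> prefixed_words M D K"
  moreover have "- word_append M d x = word_append M (- d) (- x)" for d x :: "nat \<Rightarrow> 'a"
    by (simp add: word_append_def fun_eq_iff)
  ultimately show "- u \<in> prefixed_words M D K"
    using assms add_subgroup_words unfolding prefixed_words_def
    by auto (blast intro: add_subgroup_uminus)
qed

lemma left_perp_prefixed_words:
  assumes \<beta>: "bilinear_qz \<beta>" "inj \<beta>" and "0 \<in> D"
    and q: "q \<in> left_perp (word_form \<beta> (M + K)) (words (M + K)) (prefixed_words M D K)"
  obtains b where "b \<in> left_perp (word_form \<beta> M) (words M) D" "q = word_append M b 0"
proof -
  obtain b a where ba: "b \<in> words M" "a \<in> words K" "q = word_append M b a"
    using q unfolding left_perp_def by (auto elim: words_add_cases)
  have orth: "word_form \<beta> M b d + word_form \<beta> K a x = 0" if "d \<in> D" "x \<in> words K" for d x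
    using q that unfolding left_perp_def prefixed_words_def ba(3) by (auto simp flip: word_form_append)
  note form_zero = bilinear_qz_zero_left[OF bilinear_word_form[OF \<beta>(1)]]
    bilinear_qz_zero_right[OF bilinear_word_form[OF \<beta>(1)]]
  have "a = 0"
    using left_nondegenerate_word_form[OF \<beta>] ba(2) orth[OF \<open>0 \<in> D\<close>] form_zero
    unfolding left_nondegenerate_def by simp
  moreover have "b \<in> left_perp (word_form \<beta> M) (words M) D"
    using ba(1) orth add_subgroup_zero[OF add_subgroup_words] form_zero
    unfolding left_perp_def \<open>a = 0\<close> by fastforce
  ultimately show ?thesis
    using ba(3) that by blast
qed


definition quotient_code :: "nat \<Rightarrow> (nat \<Rightarrow> 'v) set \<Rightarrow> nat \<Rightarrow> (nat \<Rightarrow> 'v) set \<Rightarrow> (nat \<Rightarrow> 'v::zero) set" where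
  "quotient_code M D K C = {x \<in> words K. \<exists>y\<in>D. word_append M y x \<in> C}"

lemma is_code_quotient_code:
  fixes smult :: "'r::ring_1 \<Rightarrow> 'v::ab_group_add \<Rightarrow> 'v"
  assumes sm: "left_module smult" and D: "is_code smult M D" and C: "is_code smult (M + K) C"
  shows "is_code smult K (quotient_code M D K C)"
proof -
  let ?Q = "quotient_code M D K C"
  note D_subgroup = add_subgroup_code[OF sm D] and C_subgroup = add_subgroup_code[OF sm C]
  have "?Q \<subseteq> words K"
    by (auto simp: quotient_code_def)
  moreover have "(\<lambda>_. 0) \<in> ?Q"
  proof -
    have "word_append M 0 0 \<in> C"
      using add_subgroup_zero[OF C_subgroup] by (simp add: word_append_zero)
    then have "0 \<in> ?Q"
      using add_subgroup_zero[OF D_subgroup] add_subgroup_zero[OF add_subgroup_words]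
      unfolding quotient_code_def by blast
    then show ?thesis
      by (simp only: zero_fun_def)
  qed
  moreover have "(\<lambda>i. x i + x' i) \<in> ?Q" if x: "x \<in> ?Q" "x' \<in> ?Q" for x x'
  proof -
    obtain y y' where "x \<in> words K" "x' \<in> words K" "y \<in> D" "y' \<in> D"
      "word_append M y x \<in> C" "word_append M y' x' \<in> C"
      using x unfolding quotient_code_def by blast
    then have "x + x' \<in> words K" "y + y' \<in> D" "word_append M (y + y') (x + x') \<in> C"
      using add_subgroup_add[OF add_subgroup_words] add_subgroup_add[OF D_subgroup]
        add_subgroup_add[OF C_subgroup] by (simp_all flip: word_append_add)
    then have "x + x' \<in> ?Q"
      unfolding quotient_code_def by blast
    then show ?thesis
      by (simp only: plus_fun_def)
  qed
  moreover have "(\<lambda>i. smult r (x i)) \<in> ?Q" if x: "x \<in> ?Q" for x r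
  proof -
    obtain y where "x \<in> words K" "y \<in> D" "word_append M y x \<in> C"
      using x unfolding quotient_code_def by blast
    then have "(\<lambda>i. smult r (x i)) \<in> words K" "(\<lambda>i. smult r (y i)) \<in> D"
      "word_append M (\<lambda>i. smult r (y i)) (\<lambda>i. smult r (x i)) \<in> C"
      using C D left_module_smult_zero[OF sm] unfolding is_code_def words_def word_append_smult[symmetric]
      by simp_all
    then show ?thesis
      unfolding quotient_code_def by blast
  qed
  ultimately show ?thesis
    unfolding is_code_def by blast
qed

lemma isotropic_quotient_code:
  assumes "isotropic \<Phi> M D" "isotropic \<Phi> (M + K) C"
  shows "isotropic \<Phi> K (quotient_code M D K C)"
  unfolding isotropic_def
proof (intro ballI)
  fix x \<phi> assume "x \<in> quotient_code M D K C" "\<phi> \<in> \<Phi>"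
  then obtain y where "y \<in> D" "word_append M y x \<in> C"
    unfolding quotient_code_def by blast
  then show "(\<Sum>i<K. \<phi> (x i)) = 0"
    using assms \<open>\<phi> \<in> \<Phi>\<close> sum_word_append[where f = \<phi>] unfolding isotropic_def by force
qed

lemma quotient_code_subset_dual:
  assumes "D \<subseteq> dual_code \<beta> M D" "C \<subseteq> dual_code \<beta> (M + K) C"
  shows "quotient_code M D K C \<subseteq> dual_code \<beta> K (quotient_code M D K C)"
proof
  fix x assume "x \<in> quotient_code M D K C"
  then obtain y where x: "x \<in> words K" "y \<in> D" "word_append M y x \<in> C"
    unfolding quotient_code_def by blast
  have "word_form \<beta> K x x' = 0" if x': "x' \<in> quotient_code M D K C" for x'
  proof -
    obtain y' where "y' \<in> D" "word_append M y' x' \<in> C"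
      using x' unfolding quotient_code_def by blast
    then have "word_form \<beta> (M + K) (word_append M y x) (word_append M y' x') = 0" "word_form \<beta> M y y' = 0"
      using assms x unfolding dual_code_eq_left_perp left_perp_def by blast+
    then show ?thesis
      by (simp add: word_form_append)
  qed
  then show "x \<in> dual_code \<beta> K (quotient_code M D K C)"
    using x(1) unfolding dual_code_eq_left_perp left_perp_def by blast
qed

lemma dual_subset_quotient_code:
  fixes \<beta> :: "'v::{ab_group_add,finite} \<Rightarrow> 'v \<Rightarrow> qz"
  assumes \<beta>: "bilinear_qz \<beta>" "inj \<beta>"
    and D: "add_subgroup D" "D \<subseteq> words M" "dual_code \<beta> M D \<subseteq> D"
    and C: "add_subgroup C" "C \<subseteq> words (M + K)" "dual_code \<beta> (M + K) C \<subseteq> C"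
  shows "dual_code \<beta> K (quotient_code M D K C) \<subseteq> quotient_code M D K C"
proof
  let ?B = "word_form \<beta> (M + K)" and ?W = "words (M + K)" and ?E = "prefixed_words M D K"
  fix x assume x: "x \<in> dual_code \<beta> K (quotient_code M D K C)"
  \<comment> \<open>(0, x) is orthogonal to C \<inter> (D \<times> V^K), so it splits as p + (b, 0) with p \<in> C and b \<in> D^\<bottom> = D.\<close>
  have "word_append M 0 x \<in> left_perp ?B ?W (C \<inter> ?E)"
  proof -
    have "word_append M 0 x \<in> ?W"
      using x by (intro word_append_words) (simp_all add: dual_code_def words_def)
    moreover have "word_form \<beta> K x a = 0" if "d \<in> D" "a \<in> words K" "word_append M d a \<in> C" for d a
      using x that unfolding dual_code_eq_left_perp left_perp_def quotient_code_def by blast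
    ultimately show ?thesis
      using x bilinear_qz_zero_left[OF bilinear_word_form[OF \<beta>(1)]] add_subgroup_zero[OF add_subgroup_words]
      unfolding left_perp_def prefixed_words_def dual_code_eq_left_perp
      by (auto simp: word_form_append intro: word_append_words)
  qed
  also have "\<dots> = left_perp ?B ?W C + left_perp ?B ?W ?E"
    using left_perp_Int[OF finite_words add_subgroup_words bilinear_word_form[OF \<beta>(1)]
        left_nondegenerate_word_form[OF \<beta>] C(1,2)
        add_subgroup_prefixed_words[OF D(1)] prefixed_words_subset[OF D(2)]] .
  finally obtain p q where p: "p \<in> C" and q: "q \<in> left_perp ?B ?W ?E" and "word_append M 0 x = p + q"
    using C(3) unfolding dual_code_eq_left_perp by (blast elim: set_plus_elim)
  moreover obtain b where b: "b \<in> D" "q = word_append M b 0"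
    using left_perp_prefixed_words[OF \<beta> add_subgroup_zero[OF D(1)] q] D(3)
    unfolding dual_code_eq_left_perp by blast
  ultimately have "p = word_append M 0 x - word_append M b 0"
    by simp
  also have "\<dots> = word_append M (- b) x"
    by (simp add: word_append_def fun_eq_iff)
  finally have "word_append M (- b) x \<in> C" "- b \<in> D"
    using p add_subgroup_uminus[OF D(1) b(1)] by simp_all
  then show "x \<in> quotient_code M D K C"
    using x unfolding quotient_code_def dual_code_def by blast
qed

lemma code_of_type_quotient_code:
  fixes smult :: "'r::ring_1 \<Rightarrow> 'v::{ab_group_add,finite} \<Rightarrow> 'v"
  assumes sm: "left_module smult" and \<beta>: "bilinear_qz \<beta>" "inj \<beta>"
    and D: "code_of_type smult \<beta> \<Phi> M D" and C: "code_of_type smult \<beta> \<Phi> (M + K) C"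
  shows "code_of_type smult \<beta> \<Phi> K (quotient_code M D K C)"
proof -
  have D': "is_code smult M D" "D = dual_code \<beta> M D" "isotropic \<Phi> M D"
    and C': "is_code smult (M + K) C" "C = dual_code \<beta> (M + K) C" "isotropic \<Phi> (M + K) C"
    using C D unfolding code_of_type_def by auto
  have "quotient_code M D K C \<subseteq> dual_code \<beta> K (quotient_code M D K C)"
    by (rule quotient_code_subset_dual) (simp_all add: D'(2)[symmetric] C'(2)[symmetric])
  moreover have "dual_code \<beta> K (quotient_code M D K C) \<subseteq> quotient_code M D K C"
    by (rule dual_subset_quotient_code[OF \<beta> add_subgroup_code[OF sm D'(1)] _ _ add_subgroup_code[OF sm C'(1)]])
      (use D'(1) C'(1) in \<open>simp_all add: D'(2)[symmetric] C'(2)[symmetric] is_code_def\<close>)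
  ultimately have "quotient_code M D K C = dual_code \<beta> K (quotient_code M D K C)"
    by (rule antisym)
  then show ?thesis
    using is_code_quotient_code[OF sm D'(1) C'(1)] isotropic_quotient_code[OF D'(3) C'(3)]
    unfolding code_of_type_def by blast
qed

lemma Gcd_eq_if_diff_closed:
  fixes S :: "nat set"
  assumes "m \<in> S" "0 < m" "\<And>N. N \<in> S \<Longrightarrow> m \<le> N" "\<And>N. N \<in> S \<Longrightarrow> m < N \<Longrightarrow> N - m \<in> S"
  shows "Gcd S = m"
proof (rule dvd_antisym)
  show "Gcd S dvd m"
    using assms(1) by (rule Gcd_dvd)
  have "m dvd N" if "N \<in> S" for N
    using that
  proof (induction N rule: less_induct)
    case (less N)
    show ?case
    proof (cases "m < N")
      case True
      then have "m dvd N - m"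
        using less assms(2,4) by simp
      then show ?thesis
        using True by (metis dvd_add_triv_left_iff le_add_diff_inverse less_imp_le)
    next
      case False
      then have "N = m"
        using assms(3)[OF less.prems] by simp
      then show ?thesis
        by simp
    qed
  qed
  then show "m dvd Gcd S"
    by (simp add: Gcd_greatest)
qed

theorem mainTheorem3:
  fixes smult :: "'r::{ring_1,finite} \<Rightarrow> 'v::{ab_group_add,finite} \<Rightarrow> 'v"
    and \<beta> :: "'v \<Rightarrow> 'v \<Rightarrow> qz"
    and \<Phi> :: "('v \<Rightarrow> qz) set"
  assumes "form_ring smult \<beta> \<Phi>"
    and "\<exists>N\<ge>1. \<exists>C. code_of_type smult \<beta> \<Phi> N C"
  shows "Gcd {N::nat. N \<ge> 1 \<and> (\<exists>C. code_of_type smult \<beta> \<Phi> N C)}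
       = (LEAST N::nat. N \<ge> 1 \<and> (\<exists>C. code_of_type smult \<beta> \<Phi> N C))"
proof -
  let ?S = "{N::nat. N \<ge> 1 \<and> (\<exists>C. code_of_type smult \<beta> \<Phi> N C)}"
  let ?m = "LEAST N::nat. N \<ge> 1 \<and> (\<exists>C. code_of_type smult \<beta> \<Phi> N C)"
  have sm: "left_module smult" and \<beta>: "bilinear_qz \<beta>" "inj \<beta>"
    using assms(1) bij_betw_imp_inj_on
    unfolding form_ring_def admissible_def nonsingular_def by blast+
  have m: "?m \<in> ?S"
    using LeastI_ex[OF assms(2)] by simp
  have "N - ?m \<in> ?S" if N: "N \<in> ?S" "?m < N" for N
  proof -
    obtain D where "code_of_type smult \<beta> \<Phi> ?m D"
      using m by blast
    moreover obtain C where "code_of_type smult \<beta> \<Phi> (?m + (N - ?m)) C"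
      using N by auto
    ultimately have "code_of_type smult \<beta> \<Phi> (N - ?m) (quotient_code ?m D (N - ?m) C)"
      by (rule code_of_type_quotient_code[OF sm \<beta>])
    then show ?thesis
      using N(2) by auto
  qed
  moreover have "?m \<le> N" if "N \<in> ?S" for N
    using that by (simp add: Least_le)
  moreover have "0 < ?m"
    using m by simp
  ultimately show ?thesis
    using m by (intro Gcd_eq_if_diff_closed)
qed

end
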